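(* Let $M$ be a timelike surface in $\mathbb{R}^{n,1}$ with a canonical null direction with respect to a constant unit spacelike vector $Z$. Then locally there exists a smooth function $f:M\to\mathbb{R}$ with $\nabla f=Z^\top$, and any such $f$ is harmonic: $\Delta f=0$.
   Context: $\mathbb{R}^{n,1}$ is $\mathbb{R}^{n+1}$ with the metric $-dx_1^2+dx_2^2+\dots+dx_{n+1}^2$. A surface is timelike if the induced metric has signature $(1,1)$; a vector $v$ is lightlike if $v\ne0$ and $\langle v,v\rangle=0$. For a constant vector $Z$, $Z=Z^\top+Z^\perp$ along $M$; $M$ has a canonical null direction with respect to $Z$ if $Z^\top$ is lightlike everywhere on $M$. $\nabla f$ is the gradient with respect to the induced Lorentzian metric and $\Delta f$ the trace of the Hessian of $f$ with respect to that metric. *)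

theory Defs
  imports "HOL-Analysis.Analysis"
begin

text \<open>Minkowski space R^{n,1}: points are pairs (x1, (x2,...,x_{n+1})) with
  x1 the timelike coordinate; the spatial part is real^'n, CARD('n) = n.\<close>

type_synonym 'n minkowski = "real \<times> (real ^ 'n)"

definition mink :: "'n::finite minkowski \<Rightarrow> 'n minkowski \<Rightarrow> real" where
  "mink v w = - fst v * fst w + snd v \<bullet> snd w"

definition lightlike :: "'n::finite minkowski \<Rightarrow> bool" where
  "lightlike v \<longleftrightarrow> v \<noteq> 0 \<and> mink v v = 0"

definition coord_dir :: "nat \<Rightarrow> real \<times> real" where
  "coord_dir i = (if i = 0 then (1, 0) else (0, 1))"

definition pd :: "nat \<Rightarrow> (real \<times> real \<Rightarrow> 'b::real_normed_vector) \<Rightarrow> real \<times> real \<Rightarrow> 'b" where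
  "pd i F p = frechet_derivative F (at p) (coord_dir i)"

fun Ck_on :: "nat \<Rightarrow> (real \<times> real) set \<Rightarrow> (real \<times> real \<Rightarrow> 'b::real_normed_vector) \<Rightarrow> bool" where
  "Ck_on 0 U F \<longleftrightarrow> continuous_on U F"
| "Ck_on (Suc k) U F \<longleftrightarrow> F differentiable_on U \<and> continuous_on U F
      \<and> Ck_on k U (pd 0 F) \<and> Ck_on k U (pd 1 F)"

definition smooth_on :: "(real \<times> real) set \<Rightarrow> (real \<times> real \<Rightarrow> 'b::real_normed_vector) \<Rightarrow> bool" where
  "smooth_on U F \<longleftrightarrow> (\<forall>k. Ck_on k U F)"

definition ind_metric :: "(real \<times> real \<Rightarrow> 'n::finite minkowski) \<Rightarrow> nat \<Rightarrow> nat \<Rightarrow> real \<times> real \<Rightarrow> real" where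
  "ind_metric X i j p = mink (pd i X p) (pd j X p)"

definition metric_det :: "(real \<times> real \<Rightarrow> 'n::finite minkowski) \<Rightarrow> real \<times> real \<Rightarrow> real" where
  "metric_det X p = ind_metric X 0 0 p * ind_metric X 1 1 p - ind_metric X 0 1 p * ind_metric X 1 0 p"

definition inv_metric :: "(real \<times> real \<Rightarrow> 'n::finite minkowski) \<Rightarrow> nat \<Rightarrow> nat \<Rightarrow> real \<times> real \<Rightarrow> real" where
  "inv_metric X i j p =
     (if i = 0 \<and> j = 0 then ind_metric X 1 1 p / metric_det X p
      else if i = 1 \<and> j = 1 then ind_metric X 0 0 p / metric_det X p
      else - ind_metric X 0 1 p / metric_det X p)"

text \<open>Timelike: the induced metric has signature (1,1), i.e. negative determinant
  (for a symmetric 2x2 matrix this is equivalent).\<close>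

definition timelike_surface :: "(real \<times> real) set \<Rightarrow> (real \<times> real \<Rightarrow> 'n::finite minkowski) \<Rightarrow> bool" where
  "timelike_surface U X \<longleftrightarrow> open U \<and> smooth_on U X \<and> (\<forall>p\<in>U. metric_det X p < 0)"

text \<open>Tangential part Z^T of a constant vector Z: the tangent vector with
  Z - Z^T orthogonal to the tangent plane, i.e. Z^T = g^ij <Z, X_j> X_i.\<close>

definition tang_part :: "(real \<times> real \<Rightarrow> 'n::finite minkowski) \<Rightarrow> 'n minkowski \<Rightarrow> real \<times> real \<Rightarrow> 'n minkowski" where
  "tang_part X Z p = (\<Sum>i<2. \<Sum>j<2. (inv_metric X i j p * mink Z (pd j X p)) *\<^sub>R pd i X p)"

definition canonical_null_direction :: "(real \<times> real) set \<Rightarrow> (real \<times> real \<Rightarrow> 'n::finite minkowski) \<Rightarrow> 'n minkowski \<Rightarrow> bool" where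
  "canonical_null_direction U X Z \<longleftrightarrow> (\<forall>p\<in>U. lightlike (tang_part X Z p))"

definition surf_grad :: "(real \<times> real \<Rightarrow> 'n::finite minkowski) \<Rightarrow> (real \<times> real \<Rightarrow> real) \<Rightarrow> real \<times> real \<Rightarrow> 'n minkowski" where
  "surf_grad X f p = (\<Sum>i<2. \<Sum>j<2. (inv_metric X i j p * pd j f p) *\<^sub>R pd i X p)"

definition christoffel :: "(real \<times> real \<Rightarrow> 'n::finite minkowski) \<Rightarrow> nat \<Rightarrow> nat \<Rightarrow> nat \<Rightarrow> real \<times> real \<Rightarrow> real" where
  "christoffel X k i j p = (\<Sum>l<2. inv_metric X k l p *
      ((pd i (ind_metric X j l) p + pd j (ind_metric X i l) p - pd l (ind_metric X i j) p) / 2))"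

definition surf_laplacian :: "(real \<times> real \<Rightarrow> 'n::finite minkowski) \<Rightarrow> (real \<times> real \<Rightarrow> real) \<Rightarrow> real \<times> real \<Rightarrow> real" where
  "surf_laplacian X f p = (\<Sum>i<2. \<Sum>j<2. inv_metric X i j p *
      (pd i (pd j f) p - (\<Sum>k<2. christoffel X k i j p * pd k f p)))"

end

theory Submission
  imports Defs
begin

text \<open>The potential is \<open>f = \<langle>Z, X\<rangle>\<close>: its coordinate derivatives are \<open>\<langle>Z, X\<^sub>k\<rangle>\<close>, the
  covariant components of \<open>Z\<^sup>\<top>\<close>, so \<open>\<nabla>f = Z\<^sup>\<top>\<close>. Conversely \<open>\<nabla>f = Z\<^sup>\<top>\<close> forces
  \<open>f\<^sub>k = \<langle>Z, X\<^sub>k\<rangle>\<close>, whence \<open>Hess f(\<partial>\<^sub>i, \<partial>\<^sub>j) = \<langle>Z, X\<^sub>i\<^sub>j\<rangle> - \<Gamma>\<^sup>k\<^sub>i\<^sub>j f\<^sub>k\<close>.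
  Differentiating \<open>\<langle>\<nabla>f, \<nabla>f\<rangle> = \<langle>Z\<^sup>\<top>, Z\<^sup>\<top>\<rangle> = 0\<close> gives \<open>Hess f(\<nabla>f, \<cdot>) = 0\<close>, and a
  symmetric bilinear form on a Lorentzian plane that annihilates a nonzero null vector is
  trace free. The only analytic input is the symmetry of second derivatives, proved from the
  mean value theorem for the notion of \<open>C\<^sup>2\<close> used in the definitions.\<close>

section \<open>The Minkowski form\<close>

lemma mink_commute: "mink v w = mink w v"
  unfolding mink_def by (simp add: inner_commute mult.commute)

lemma mink_eq_inner: "mink v w = (- fst v, snd v) \<bullet> w"
  unfolding mink_def by (cases w) (simp add: inner_Pair)

lemma bounded_bilinear_mink: "bounded_bilinear (mink :: 'n::finite minkowski \<Rightarrow> _)"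
proof -
  have "bounded_linear (\<lambda>v :: 'n minkowski. (- fst v, snd v))"
    by (intro bounded_linear_Pair bounded_linear_minus bounded_linear_fst bounded_linear_snd)
  from bounded_bilinear.comp1[OF bounded_bilinear_inner this] show ?thesis
    by (simp add: mink_eq_inner[abs_def])
qed

lemmas bounded_linear_mink_right = bounded_bilinear.bounded_linear_right[OF bounded_bilinear_mink]
lemmas mink_sum_left = bounded_bilinear.sum_left[OF bounded_bilinear_mink]
lemmas mink_scaleR_left = bounded_bilinear.scaleR_left[OF bounded_bilinear_mink]

section \<open>Coordinate partial derivatives\<close>

lemma pd_eq_of_has_derivative: "(F has_derivative F') (at p) \<Longrightarrow> pd i F p = F' (coord_dir i)"
  unfolding pd_def using frechet_derivative_at by metis

lemma pd_index_nonzero: "k \<noteq> 0 \<Longrightarrow> pd k F = pd 1 F"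
  by (simp add: pd_def coord_dir_def fun_eq_iff)

lemma pd_cong_open:
  assumes "open U" "p \<in> U" "\<And>x. x \<in> U \<Longrightarrow> F x = G x"
  shows "pd i F p = pd i G p"
proof -
  have "(\<lambda>D. (F has_derivative D) (at p)) = (\<lambda>D. (G has_derivative D) (at p))"
    using has_derivative_transform_within_open[OF _ assms(1,2)] assms(3) by metis
  then show ?thesis unfolding pd_def frechet_derivative_def by simp
qed

lemma pd_const: "pd i (\<lambda>x. c) p = 0"
  using pd_eq_of_has_derivative[OF has_derivative_const[of c "at p"], of i] by simp

lemma pd_bounded_linear:
  assumes "bounded_linear L" "F differentiable (at p)"
  shows "pd i (\<lambda>x. L (F x)) p = L (pd i F p)"
  using bounded_linear.has_derivative[OF assms(1) frechet_derivative_works[THEN iffD1, OF assms(2)]]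
  by (simp add: pd_eq_of_has_derivative) (simp add: pd_def)

lemma pd_bounded_bilinear:
  assumes "bounded_bilinear mul" "A differentiable (at p)" "B differentiable (at p)"
  shows "pd i (\<lambda>x. mul (A x) (B x)) p = mul (pd i A p) (B p) + mul (A p) (pd i B p)"
  using bounded_bilinear.FDERIV[OF assms(1) assms(2,3)[THEN frechet_derivative_works[THEN iffD1]]]
  by (simp add: pd_eq_of_has_derivative) (simp add: pd_def add.commute)

lemmas pd_mult = pd_bounded_bilinear[OF bounded_bilinear_mult]
lemmas pd_mink = pd_bounded_bilinear[OF bounded_bilinear_mink]

lemma pd_add:
  assumes "A differentiable (at p)" "B differentiable (at p)"
  shows "pd i (\<lambda>x. A x + B x) p = pd i A p + pd i B p"
  using has_derivative_add[OF assms[THEN frechet_derivative_works[THEN iffD1]]]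
  by (simp add: pd_eq_of_has_derivative) (simp add: pd_def)

lemma pd_diff:
  assumes "A differentiable (at p)" "B differentiable (at p)"
  shows "pd i (\<lambda>x. A x - B x) p = pd i A p - pd i B p"
  using has_derivative_diff[OF assms[THEN frechet_derivative_works[THEN iffD1]]]
  by (simp add: pd_eq_of_has_derivative) (simp add: pd_def)

lemma pd_quadratic_form:
  fixes a b c u v :: "real \<times> real \<Rightarrow> real"
  assumes "a differentiable (at p)" "b differentiable (at p)" "c differentiable (at p)"
    "u differentiable (at p)" "v differentiable (at p)"
  shows "pd m (\<lambda>x. a x * u x * u x - 2 * b x * u x * v x + c x * v x * v x) p =
      pd m a p * u p * u p + 2 * a p * u p * pd m u p
      - 2 * (pd m b p * u p * v p + b p * pd m u p * v p + b p * u p * pd m v p)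
      + pd m c p * v p * v p + 2 * c p * v p * pd m v p"
proof -
  note diff = assms differentiable_mult differentiable_const
  have "pd m (\<lambda>x. a x * u x * u x - 2 * b x * u x * v x + c x * v x * v x) p
      = pd m (\<lambda>x. a x * u x * u x) p - pd m (\<lambda>x. 2 * b x * u x * v x) p
        + pd m (\<lambda>x. c x * v x * v x) p"
    by (simp add: pd_add pd_diff diff differentiable_diff)
  then show ?thesis by (simp add: pd_mult pd_const diff algebra_simps)
qed

lemma differentiable_bounded_linear:
  assumes "bounded_linear L" "A differentiable (at x within s)"
  shows "(\<lambda>x. L (A x)) differentiable (at x within s)"
  using assms(2) bounded_linear.has_derivative[OF assms(1)] unfolding differentiable_def by blast

lemma differentiable_bounded_bilinear:
  assumes "bounded_bilinear mul" "A differentiable (at x within s)" "B differentiable (at x within s)"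
  shows "(\<lambda>x. mul (A x) (B x)) differentiable (at x within s)"
proof -
  obtain A' B' where "(A has_derivative A') (at x within s)" "(B has_derivative B') (at x within s)"
    using assms(2,3) unfolding differentiable_def by blast
  from bounded_bilinear.FDERIV[OF assms(1) this] show ?thesis by (rule differentiableI)
qed

lemma differentiable_on_cong_open:
  assumes "open U" "\<And>x. x \<in> U \<Longrightarrow> F x = G x" "G differentiable_on U"
  shows "F differentiable_on U"
  using assms unfolding differentiable_on_eq_differentiable_at[OF assms(1)] differentiable_def
  by (metis has_derivative_transform_within_open)

lemma Ck_on_cong_open:
  assumes "open U" "\<And>x. x \<in> U \<Longrightarrow> F x = G x"
  shows "Ck_on k U F = Ck_on k U G"
  using assms(2)
proof (induction k arbitrary: F G)
  case 0
  then show ?case using continuous_on_cong by auto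
next
  case (Suc k)
  have "Ck_on k U (pd i F) = Ck_on k U (pd i G)" for i
    by (rule Suc.IH) (rule pd_cong_open[OF assms(1) _ Suc.prems])
  moreover have "F differentiable_on U \<longleftrightarrow> G differentiable_on U"
    using differentiable_on_cong_open[OF assms(1)] Suc.prems by metis
  moreover have "continuous_on U F = continuous_on U G"
    using Suc.prems continuous_on_cong by auto
  ultimately show ?case by simp
qed

lemma Ck_on_bounded_linear:
  assumes "bounded_linear L" "open U" "Ck_on k U F"
  shows "Ck_on k U (\<lambda>x. L (F x))"
  using assms(3)
proof (induction k arbitrary: F)
  case 0
  then show ?case using bounded_linear.continuous_on[OF assms(1)] by auto
next
  case (Suc k)
  then have dF: "F differentiable_on U" and cF: "continuous_on U F"
    and Ck: "Ck_on k U (pd 0 F)" "Ck_on k U (pd 1 F)" by auto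
  have "(\<lambda>x. L (F x)) differentiable_on U"
    using dF differentiable_bounded_linear[OF assms(1)]
    unfolding differentiable_on_eq_differentiable_at[OF assms(2)] by blast
  moreover have "continuous_on U (\<lambda>x. L (F x))"
    using bounded_linear.continuous_on[OF assms(1) cF] .
  moreover have "Ck_on k U (pd i (\<lambda>x. L (F x))) = Ck_on k U (\<lambda>x. L (pd i F x))" for i
    using pd_bounded_linear[OF assms(1)] dF differentiable_on_eq_differentiable_at[OF assms(2)]
    by (intro Ck_on_cong_open[OF assms(2)]) blast
  ultimately show ?case using Suc.IH[OF Ck(1)] Suc.IH[OF Ck(2)] by simp
qed

lemma Ck_on_2_differentiable:
  assumes "Ck_on 2 U F" "open U" "x \<in> U"
  shows "F differentiable (at x)" and "pd j F differentiable (at x)"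
proof -
  have "Ck_on (Suc (Suc 0)) U F" using assms(1) by (simp add: numeral_2_eq_2)
  then have "F differentiable_on U" "pd 0 F differentiable_on U" "pd 1 F differentiable_on U"
    by auto
  then show "F differentiable (at x)" "pd j F differentiable (at x)"
    using assms(2,3) pd_index_nonzero[of j F]
    by (cases "j = 0"; auto simp: differentiable_on_eq_differentiable_at)+
qed

lemma Ck_on_2_continuous_mixed:
  assumes "Ck_on 2 U F"
  shows "continuous_on U (pd 1 (pd 0 F))" and "continuous_on U (pd 0 (pd 1 F))"
  using assms by (simp_all add: numeral_2_eq_2)

section \<open>Symmetry of second derivatives\<close>

lemma has_real_derivative_pd_horizontal:
  fixes \<psi> :: "real \<times> real \<Rightarrow> real"
  assumes "\<psi> differentiable (at (s,t))"
  shows "((\<lambda>x. \<psi> (x,t)) has_real_derivative pd 0 \<psi> (s,t)) (at s)"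
proof -
  define D where "D = frechet_derivative \<psi> (at (s,t))"
  have hD: "(\<psi> has_derivative D) (at (s,t))" using assms frechet_derivative_works D_def by blast
  have p: "((\<lambda>x. (x,t)) has_derivative (\<lambda>h. (h,0))) (at s)"
    by (auto intro!: derivative_eq_intros)
  have "((\<lambda>x. \<psi> (x,t)) has_derivative (\<lambda>h. D (h,0))) (at s)"
    using has_derivative_compose[OF p, of \<psi> D] hD by simp
  moreover have "(\<lambda>h. D (h,0)) = (*) (D (1,0))"
  proof
    fix h :: real
    have "D (h,0) = D (h *\<^sub>R (1,0))" by simp
    also have "\<dots> = h *\<^sub>R D (1,0)" by (rule linear_simps(5)[OF has_derivative_bounded_linear[OF hD]])
    finally show "D (h,0) = D (1,0) * h" by simp
  qed
  ultimately show ?thesis unfolding has_field_derivative_def pd_def coord_dir_def D_def by simp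
qed

lemma has_real_derivative_pd_vertical:
  fixes \<psi> :: "real \<times> real \<Rightarrow> real"
  assumes "\<psi> differentiable (at (s,t))"
  shows "((\<lambda>y. \<psi> (s,y)) has_real_derivative pd 1 \<psi> (s,t)) (at t)"
proof -
  define D where "D = frechet_derivative \<psi> (at (s,t))"
  have hD: "(\<psi> has_derivative D) (at (s,t))" using assms frechet_derivative_works D_def by blast
  have p: "((\<lambda>y. (s,y)) has_derivative (\<lambda>h. (0,h))) (at t)"
    by (auto intro!: derivative_eq_intros)
  have "((\<lambda>y. \<psi> (s,y)) has_derivative (\<lambda>h. D (0,h))) (at t)"
    using has_derivative_compose[OF p, of \<psi> D] hD by simp
  moreover have "(\<lambda>h. D (0,h)) = (*) (D (0,1))"
  proof
    fix h :: real
    have "D (0,h) = D (h *\<^sub>R (0,1))" by simp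
    also have "\<dots> = h *\<^sub>R D (0,1)" by (rule linear_simps(5)[OF has_derivative_bounded_linear[OF hD]])
    finally show "D (0,h) = D (0,1) * h" by simp
  qed
  ultimately show ?thesis unfolding has_field_derivative_def pd_def coord_dir_def D_def by simp
qed

lemma mixed_pd_mean_value:
  fixes \<phi> :: "real \<times> real \<Rightarrow> real"
  assumes h: "0 < h" and box: "{a..a+h} \<times> {b..b+h} \<subseteq> U"
    and diff: "\<And>x. x \<in> U \<Longrightarrow> \<phi> differentiable (at x)"
      "\<And>x. x \<in> U \<Longrightarrow> pd 0 \<phi> differentiable (at x)"
      "\<And>x. x \<in> U \<Longrightarrow> pd 1 \<phi> differentiable (at x)"
  obtains \<xi> \<eta> \<xi>' \<eta>' where "\<xi> \<in> {a<..<a+h}" "\<eta> \<in> {b<..<b+h}" "\<xi>' \<in> {a<..<a+h}" "\<eta>' \<in> {b<..<b+h}"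
    and "pd 1 (pd 0 \<phi>) (\<xi>,\<eta>) = pd 0 (pd 1 \<phi>) (\<xi>',\<eta>')"
proof -
  \<comment> \<open>Apply the mean value theorem twice to the second difference, in both orders.\<close>
  define \<Delta> where "\<Delta> = (\<phi>(a+h,b+h) - \<phi>(a+h,b)) - (\<phi>(a,b+h) - \<phi>(a,b))"
  have inU: "(s,t) \<in> U" if "a \<le> s" "s \<le> a+h" "b \<le> t" "t \<le> b+h" for s t
    using box that by auto
  obtain \<xi> where \<xi>: "a < \<xi>" "\<xi> < a+h" and e1: "\<Delta> = h * (pd 0 \<phi> (\<xi>,b+h) - pd 0 \<phi> (\<xi>,b))"
  proof -
    have "\<exists>\<xi>. a < \<xi> \<and> \<xi> < a+h \<and> \<Delta> = (a+h-a) * (pd 0 \<phi> (\<xi>,b+h) - pd 0 \<phi> (\<xi>,b))"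
      unfolding \<Delta>_def using h inU diff(1)
      by (intro MVT2[where f="\<lambda>s. \<phi>(s,b+h) - \<phi>(s,b)"]) (auto intro!: DERIV_diff has_real_derivative_pd_horizontal)
    then show thesis using that by auto
  qed
  obtain \<eta> where \<eta>: "b < \<eta>" "\<eta> < b+h"
    and e2: "pd 0 \<phi> (\<xi>,b+h) - pd 0 \<phi> (\<xi>,b) = h * pd 1 (pd 0 \<phi>) (\<xi>,\<eta>)"
  proof -
    have "\<exists>\<eta>. b < \<eta> \<and> \<eta> < b+h \<and> pd 0 \<phi> (\<xi>,b+h) - pd 0 \<phi> (\<xi>,b) = (b+h-b) * pd 1 (pd 0 \<phi>) (\<xi>,\<eta>)"
    proof (rule MVT2[where f="\<lambda>t. pd 0 \<phi> (\<xi>,t)"])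
      fix t assume "b \<le> t" "t \<le> b+h"
      then show "((\<lambda>t. pd 0 \<phi> (\<xi>,t)) has_real_derivative pd 1 (pd 0 \<phi>) (\<xi>,t)) (at t)"
        using \<xi> by (intro has_real_derivative_pd_vertical diff(2) inU) auto
    qed (use h in simp)
    then show thesis using that by auto
  qed
  obtain \<eta>' where \<eta>': "b < \<eta>'" "\<eta>' < b+h" and e3: "\<Delta> = h * (pd 1 \<phi> (a+h,\<eta>') - pd 1 \<phi> (a,\<eta>'))"
  proof -
    have "\<exists>\<eta>'. b < \<eta>' \<and> \<eta>' < b+h \<and> (\<phi>(a+h,b+h) - \<phi>(a,b+h)) - (\<phi>(a+h,b) - \<phi>(a,b))
        = (b+h-b) * (pd 1 \<phi> (a+h,\<eta>') - pd 1 \<phi> (a,\<eta>'))"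
    proof (rule MVT2[where f="\<lambda>t. \<phi>(a+h,t) - \<phi>(a,t)"])
      fix t assume "b \<le> t" "t \<le> b+h"
      then show "((\<lambda>t. \<phi>(a+h,t) - \<phi>(a,t)) has_real_derivative pd 1 \<phi> (a+h,t) - pd 1 \<phi> (a,t)) (at t)"
        using h by (intro DERIV_diff has_real_derivative_pd_vertical diff(1) inU) auto
    qed (use h in simp)
    then show thesis using that unfolding \<Delta>_def by (auto simp: algebra_simps)
  qed
  obtain \<xi>' where \<xi>': "a < \<xi>'" "\<xi>' < a+h"
    and e4: "pd 1 \<phi> (a+h,\<eta>') - pd 1 \<phi> (a,\<eta>') = h * pd 0 (pd 1 \<phi>) (\<xi>',\<eta>')"
  proof -
    have "\<exists>\<xi>'. a < \<xi>' \<and> \<xi>' < a+h \<and> pd 1 \<phi> (a+h,\<eta>') - pd 1 \<phi> (a,\<eta>') = (a+h-a) * pd 0 (pd 1 \<phi>) (\<xi>',\<eta>')"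
      using h \<eta>' inU diff(3)
      by (intro MVT2[where f="\<lambda>s. pd 1 \<phi> (s,\<eta>')"]) (auto intro!: has_real_derivative_pd_horizontal)
    then show thesis using that by auto
  qed
  have "\<Delta> = h * (h * pd 1 (pd 0 \<phi>) (\<xi>,\<eta>))" "\<Delta> = h * (h * pd 0 (pd 1 \<phi>) (\<xi>',\<eta>'))"
    using e1 e2 e3 e4 by simp_all
  then have "pd 1 (pd 0 \<phi>) (\<xi>,\<eta>) = pd 0 (pd 1 \<phi>) (\<xi>',\<eta>')" using h by simp
  then show thesis using that \<xi> \<eta> \<xi>' \<eta>' by simp
qed

lemma dist_Pair_le_sum: "dist (s,t) (a,b) \<le> \<bar>s - a\<bar> + \<bar>t - b\<bar>"
  using norm_Pair_le[of "s - a" "t - b"] by (simp add: dist_norm)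

lemma pd_commute_real:
  fixes \<phi> :: "real \<times> real \<Rightarrow> real"
  assumes U: "open U" and q: "q \<in> U" and C: "Ck_on 2 U \<phi>"
  shows "pd 1 (pd 0 \<phi>) q = pd 0 (pd 1 \<phi>) q"
proof (rule ccontr)
  assume ne: "pd 1 (pd 0 \<phi>) q \<noteq> pd 0 (pd 1 \<phi>) q"
  obtain a b where qab: "q = (a,b)" by (cases q)
  define e where "e = \<bar>pd 1 (pd 0 \<phi>) q - pd 0 (pd 1 \<phi>) q\<bar> / 2"
  have "e > 0" using ne unfolding e_def by simp
  obtain r where r: "r > 0" "ball q r \<subseteq> U" using U q open_contains_ball by blast
  obtain d1 where d1: "d1 > 0" "\<forall>x\<in>U. dist x q < d1 \<longrightarrow> dist (pd 1 (pd 0 \<phi>) x) (pd 1 (pd 0 \<phi>) q) < e"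
    using Ck_on_2_continuous_mixed(1)[OF C] q \<open>e > 0\<close> unfolding continuous_on_iff by blast
  obtain d2 where d2: "d2 > 0" "\<forall>x\<in>U. dist x q < d2 \<longrightarrow> dist (pd 0 (pd 1 \<phi>) x) (pd 0 (pd 1 \<phi>) q) < e"
    using Ck_on_2_continuous_mixed(2)[OF C] q \<open>e > 0\<close> unfolding continuous_on_iff by blast
  define h where "h = min r (min d1 d2) / 4"
  have h: "0 < h" "2*h < r" "2*h < d1" "2*h < d2" using r d1 d2 unfolding h_def by auto
  have near: "dist (s,t) q \<le> 2*h" if "s \<in> {a..a+h}" "t \<in> {b..b+h}" for s t
    using dist_Pair_le_sum[of s t a b] that h(1) qab by auto
  have box: "{a..a+h} \<times> {b..b+h} \<subseteq> U"
    using near h(2) r(2) by (force simp: dist_commute)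
  obtain \<xi> \<eta> \<xi>' \<eta>' where pts: "\<xi> \<in> {a<..<a+h}" "\<eta> \<in> {b<..<b+h}" "\<xi>' \<in> {a<..<a+h}" "\<eta>' \<in> {b<..<b+h}"
    and eq: "pd 1 (pd 0 \<phi>) (\<xi>,\<eta>) = pd 0 (pd 1 \<phi>) (\<xi>',\<eta>')"
    using mixed_pd_mean_value[OF h(1) box] Ck_on_2_differentiable[OF C U] by metis
  have "(\<xi>,\<eta>) \<in> U" "(\<xi>',\<eta>') \<in> U" "dist (\<xi>,\<eta>) q \<le> 2*h" "dist (\<xi>',\<eta>') q \<le> 2*h"
    using box near pts by auto
  then have "dist (pd 1 (pd 0 \<phi>) (\<xi>,\<eta>)) (pd 1 (pd 0 \<phi>) q) < e"
    "dist (pd 0 (pd 1 \<phi>) (\<xi>',\<eta>')) (pd 0 (pd 1 \<phi>) q) < e"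
    using d1 d2 h by auto
  then show False using eq unfolding e_def dist_real_def by argo
qed

lemma pd_commute:
  fixes X :: "real \<times> real \<Rightarrow> 'a::real_inner"
  assumes U: "open U" and q: "q \<in> U" and C: "Ck_on 2 U X"
  shows "pd 1 (pd 0 X) q = pd 0 (pd 1 X) q"
proof -
  \<comment> \<open>Reduce to the real case by testing against the difference c of the two sides.\<close>
  define c where "c = pd 1 (pd 0 X) q - pd 0 (pd 1 X) q"
  have lin: "bounded_linear (inner c)" by (rule bounded_linear_inner_right)
  have pd_inner: "pd j (\<lambda>x. c \<bullet> X x) x = c \<bullet> pd j X x" if "x \<in> U" for j x
    using pd_bounded_linear[OF lin] Ck_on_2_differentiable(1)[OF C U that] by blast
  have pd_pd_inner: "pd i (pd j (\<lambda>x. c \<bullet> X x)) q = c \<bullet> pd i (pd j X) q" for i j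
  proof -
    have "pd i (pd j (\<lambda>x. c \<bullet> X x)) q = pd i (\<lambda>x. c \<bullet> pd j X x) q"
      by (rule pd_cong_open[OF U q pd_inner])
    also have "\<dots> = c \<bullet> pd i (pd j X) q"
      using pd_bounded_linear[OF lin] Ck_on_2_differentiable(2)[OF C U q] by blast
    finally show ?thesis .
  qed
  have "c \<bullet> pd 1 (pd 0 X) q = c \<bullet> pd 0 (pd 1 X) q"
    using pd_commute_real[OF U q Ck_on_bounded_linear[OF lin U C]] unfolding pd_pd_inner .
  then have "c \<bullet> c = 0" unfolding c_def by (simp add: inner_diff_right)
  then show ?thesis unfolding c_def by simp
qed

section \<open>Linear algebra of a null direction\<close>

lemma traceless_if_null_kernel:
  fixes g00 g01 g11 k00 k01 k11 w0 w1 :: real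
  assumes null: "g00 * w0 * w0 + 2 * g01 * w0 * w1 + g11 * w1 * w1 = 0"
    and kernel: "k00 * w0 + k01 * w1 = 0" "k01 * w0 + k11 * w1 = 0"
    and nonzero: "w0 \<noteq> 0 \<or> w1 \<noteq> 0"
  shows "g11 * k00 - 2 * g01 * k01 + g00 * k11 = 0"
proof -
  define t where "t = g11 * k00 - 2 * g01 * k01 + g00 * k11"
  have "t * w0 * w0 = k11 * (g00 * w0 * w0 + 2 * g01 * w0 * w1 + g11 * w1 * w1)
      + g11 * (w0 * (k00 * w0 + k01 * w1) - w1 * (k01 * w0 + k11 * w1))
      - 2 * g01 * w0 * (k01 * w0 + k11 * w1)"
    "t * w1 * w1 = k00 * (g00 * w0 * w0 + 2 * g01 * w0 * w1 + g11 * w1 * w1)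
      + g00 * (w1 * (k01 * w0 + k11 * w1) - w0 * (k00 * w0 + k01 * w1))
      - 2 * g01 * w1 * (k00 * w0 + k01 * w1)"
    unfolding t_def by algebra+
  then have "t * w0 * w0 = 0" "t * w1 * w1 = 0" using null kernel by simp_all
  then show ?thesis using nonzero unfolding t_def by auto
qed

lemma lessThan_2_nat: "{..<2::nat} = {0,1}" by auto

text \<open>Coordinate data at a point: \<open>g\<close> is the metric, \<open>\<Gamma> i j l = \<langle>X\<^sub>i\<^sub>j, X\<^sub>l\<rangle>\<close>,
  \<open>H i j = \<langle>Z, X\<^sub>i\<^sub>j\<rangle> = f\<^sub>i\<^sub>j\<close> and \<open>h k = \<langle>Z, X\<^sub>k\<rangle> = f\<^sub>k\<close>; then \<open>(w0, w1)\<close> is \<open>d\<close> times the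
  coordinate vector of \<open>\<nabla>f\<close> and \<open>K\<close> is \<open>d\<close> times the Hessian of \<open>f\<close>.\<close>

lemma hessian_trace_coords:
  fixes g :: "nat \<Rightarrow> nat \<Rightarrow> real" and \<Gamma> :: "nat \<Rightarrow> nat \<Rightarrow> nat \<Rightarrow> real"
    and H :: "nat \<Rightarrow> nat \<Rightarrow> real" and h :: "nat \<Rightarrow> real"
  defines "d \<equiv> g 0 0 * g 1 1 - g 0 1 * g 1 0"
  defines "ginv \<equiv> \<lambda>i j. if i = 0 \<and> j = 0 then g 1 1 / d else if i = 1 \<and> j = 1 then g 0 0 / d
                     else - g 0 1 / d"
  defines "dg \<equiv> \<lambda>i j l. \<Gamma> i j l + \<Gamma> i l j"
  defines "w0 \<equiv> g 1 1 * h 0 - g 0 1 * h 1" and "w1 \<equiv> g 0 0 * h 1 - g 0 1 * h 0"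
  defines "K \<equiv> \<lambda>i j. d * H i j - (\<Gamma> i j 0 * w0 + \<Gamma> i j 1 * w1)"
  assumes sym: "g 1 0 = g 0 1" "\<And>l. \<Gamma> 1 0 l = \<Gamma> 0 1 l" "H 1 0 = H 0 1"
    and nondegenerate: "d \<noteq> 0"
  shows "(\<Sum>i<2. \<Sum>j<2. ginv i j * (H i j - (\<Sum>k<2. (\<Sum>l<2. ginv k l *
            ((dg i j l + dg j i l - dg l i j) / 2)) * h k)))
       = (g 1 1 * K 0 0 - 2 * g 0 1 * K 0 1 + g 0 0 * K 1 1) / (d * d)"
proof -
  have ginv: "ginv 0 0 = g 1 1 / d" "ginv 1 1 = g 0 0 / d" "ginv 0 1 = - g 0 1 / d" "ginv 1 0 = - g 0 1 / d"
    unfolding ginv_def by auto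
  have "(\<Sum>i<2. \<Sum>j<2. ginv i j * (H i j - (\<Sum>k<2. (\<Sum>l<2. ginv k l *
            ((dg i j l + dg j i l - dg l i j) / 2)) * h k)))
     = ginv 0 0 * (H 0 0 - ((ginv 0 0 * \<Gamma> 0 0 0 + ginv 0 1 * \<Gamma> 0 0 1) * h 0
                              + (ginv 1 0 * \<Gamma> 0 0 0 + ginv 1 1 * \<Gamma> 0 0 1) * h 1))
     + 2 * ginv 0 1 * (H 0 1 - ((ginv 0 0 * \<Gamma> 0 1 0 + ginv 0 1 * \<Gamma> 0 1 1) * h 0
                              + (ginv 1 0 * \<Gamma> 0 1 0 + ginv 1 1 * \<Gamma> 0 1 1) * h 1))
     + ginv 1 1 * (H 1 1 - ((ginv 0 0 * \<Gamma> 1 1 0 + ginv 0 1 * \<Gamma> 1 1 1) * h 0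
                              + (ginv 1 0 * \<Gamma> 1 1 0 + ginv 1 1 * \<Gamma> 1 1 1) * h 1))"
    unfolding lessThan_2_nat dg_def using sym
    by (simp add: ginv_def algebra_simps)
  also have "\<dots> = (g 1 1 * K 0 0 - 2 * g 0 1 * K 0 1 + g 0 0 * K 1 1) / (d * d)"
    unfolding ginv K_def w0_def w1_def using nondegenerate by (simp add: field_simps)
  finally show ?thesis .
qed

lemma hessian_null_row:
  fixes g :: "nat \<Rightarrow> nat \<Rightarrow> real" and \<Gamma> :: "nat \<Rightarrow> nat \<Rightarrow> nat \<Rightarrow> real"
    and H :: "nat \<Rightarrow> nat \<Rightarrow> real" and h :: "nat \<Rightarrow> real"
  defines "d \<equiv> g 0 0 * g 1 1 - g 0 1 * g 1 0"
  defines "dg \<equiv> \<lambda>i j l. \<Gamma> i j l + \<Gamma> i l j"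
  defines "w0 \<equiv> g 1 1 * h 0 - g 0 1 * h 1" and "w1 \<equiv> g 0 0 * h 1 - g 0 1 * h 0"
  defines "K \<equiv> \<lambda>i j. d * H i j - (\<Gamma> i j 0 * w0 + \<Gamma> i j 1 * w1)"
  assumes sym: "g 1 0 = g 0 1"
    and null: "g 1 1 * h 0 * h 0 - 2 * g 0 1 * h 0 * h 1 + g 0 0 * h 1 * h 1 = 0"
    and null_deriv: "dg m 1 1 * h 0 * h 0 + 2 * g 1 1 * h 0 * H m 0
      - 2 * (dg m 0 1 * h 0 * h 1 + g 0 1 * H m 0 * h 1 + g 0 1 * h 0 * H m 1)
      + dg m 0 0 * h 1 * h 1 + 2 * g 0 0 * h 1 * H m 1 = 0"
  shows "K m 0 * w0 + K m 1 * w1 = 0"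
proof -
  have "2 * (K m 0 * w0 + K m 1 * w1) = d * (dg m 1 1 * h 0 * h 0 + 2 * g 1 1 * h 0 * H m 0
      - 2 * (dg m 0 1 * h 0 * h 1 + g 0 1 * H m 0 * h 1 + g 0 1 * h 0 * H m 1)
      + dg m 0 0 * h 1 * h 1 + 2 * g 0 0 * h 1 * H m 1)
      - (dg m 0 0 * g 1 1 + g 0 0 * dg m 1 1 - 2 * g 0 1 * dg m 0 1)
         * (g 1 1 * h 0 * h 0 - 2 * g 0 1 * h 0 * h 1 + g 0 0 * h 1 * h 1)"
    unfolding K_def d_def dg_def sym w0_def w1_def by algebra
  then show ?thesis using null null_deriv by simp
qed

section \<open>Gradient and Laplacian on the surface\<close>

lemma mink_metric_dual_pd:
  assumes "metric_det X x \<noteq> 0" "k < 2"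
  shows "mink (\<Sum>i<2. \<Sum>j<2. (inv_metric X i j x * e j) *\<^sub>R pd i X x) (pd k X x) = e k"
proof -
  \<comment> \<open>Stated with \<open>Suc 0\<close>, the form in which the simplifier presents the index 1 here.\<close>
  have sym: "mink (pd (Suc 0) X x) (pd 0 X x) = mink (pd 0 X x) (pd (Suc 0) X x)" by (rule mink_commute)
  have det: "metric_det X x = mink (pd 0 X x) (pd 0 X x) * mink (pd (Suc 0) X x) (pd (Suc 0) X x)
     - mink (pd 0 X x) (pd (Suc 0) X x) * mink (pd 0 X x) (pd (Suc 0) X x)"
    unfolding metric_det_def ind_metric_def using sym by simp
  have "mink (\<Sum>i<2. \<Sum>j<2. (inv_metric X i j x * e j) *\<^sub>R pd i X x) (pd k X x)
     = (\<Sum>i<2. \<Sum>j<2. (inv_metric X i j x * e j) * mink (pd i X x) (pd k X x))"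
    by (simp add: mink_sum_left mink_scaleR_left)
  also have "\<dots> = e k" using assms(1) less_2_cases[OF assms(2)]
    unfolding lessThan_2_nat inv_metric_def ind_metric_def
    by (auto simp: sym field_simps) (auto simp: det algebra_simps)
  finally show ?thesis .
qed

lemma pd_eq_mink_of_surf_grad_eq_tang_part:
  assumes "metric_det X x \<noteq> 0" "surf_grad X f x = tang_part X Z x"
  shows "pd k f x = mink Z (pd k X x)"
proof -
  have low: "pd k f x = mink Z (pd k X x)" if "k < 2" for k
    using assms(2) mink_metric_dual_pd[OF assms(1) that, of "\<lambda>j. pd j f x"]
      mink_metric_dual_pd[OF assms(1) that, of "\<lambda>j. mink Z (pd j X x)"]
    unfolding surf_grad_def tang_part_def by simp
  show ?thesis
  proof (cases "k = 0")
    case False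
    show ?thesis unfolding pd_index_nonzero[OF False] using low[of 1] by simp
  qed (use low in simp)
qed

lemma surf_grad_mink_eq_tang_part:
  assumes "X differentiable (at x)"
  shows "surf_grad X (\<lambda>y. mink Z (X y)) x = tang_part X Z x"
  unfolding surf_grad_def tang_part_def
  using pd_bounded_linear[OF bounded_linear_mink_right assms] by simp

definition tang_quad :: "(real \<times> real \<Rightarrow> 'n::finite minkowski) \<Rightarrow> 'n minkowski \<Rightarrow> real \<times> real \<Rightarrow> real" where
  "tang_quad X Z x = ind_metric X 1 1 x * mink Z (pd 0 X x) * mink Z (pd 0 X x)
     - 2 * ind_metric X 0 1 x * mink Z (pd 0 X x) * mink Z (pd 1 X x)
     + ind_metric X 0 0 x * mink Z (pd 1 X x) * mink Z (pd 1 X x)"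

lemma metric_det_mult_mink_tang_part:
  assumes "metric_det X x \<noteq> 0"
  shows "metric_det X x * mink (tang_part X Z x) (tang_part X Z x) = tang_quad X Z x"
proof -
  define T where "T = tang_part X Z x"
  have T: "T = (\<Sum>i<2. \<Sum>j<2. (inv_metric X i j x * mink Z (pd j X x)) *\<^sub>R pd i X x)"
    unfolding T_def tang_part_def ..
  have dual: "mink (pd i X x) T = mink Z (pd i X x)" if "i < 2" for i
    using mink_metric_dual_pd[OF assms that, of "\<lambda>j. mink Z (pd j X x)"] mink_commute T by metis
  have "mink T T = mink (\<Sum>i<2. \<Sum>j<2. (inv_metric X i j x * mink Z (pd j X x)) *\<^sub>R pd i X x) T"
    by (rule arg_cong[where f="\<lambda>u. mink u T", OF T])
  also have "\<dots> = (\<Sum>i<2. \<Sum>j<2. inv_metric X i j x * mink Z (pd j X x) * mink (pd i X x) T)"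
    by (simp add: mink_sum_left mink_scaleR_left)
  also have "\<dots> = (\<Sum>i<2. \<Sum>j<2. inv_metric X i j x * mink Z (pd j X x) * mink Z (pd i X x))"
    using dual by (intro sum.cong refl) simp
  finally have mT: "mink T T = (\<Sum>i<2. \<Sum>j<2. inv_metric X i j x * mink Z (pd j X x) * mink Z (pd i X x))" .
  show ?thesis using assms unfolding T_def[symmetric] mT lessThan_2_nat inv_metric_def tang_quad_def
    by (simp add: field_simps)
qed

lemma pd_tang_quad:
  assumes "\<And>j. pd j X differentiable (at q)"
  shows "pd m (tang_quad X Z) q =
      pd m (ind_metric X 1 1) q * mink Z (pd 0 X q) * mink Z (pd 0 X q)
      + 2 * ind_metric X 1 1 q * mink Z (pd 0 X q) * mink Z (pd m (pd 0 X) q)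
      - 2 * (pd m (ind_metric X 0 1) q * mink Z (pd 0 X q) * mink Z (pd 1 X q)
             + ind_metric X 0 1 q * mink Z (pd m (pd 0 X) q) * mink Z (pd 1 X q)
             + ind_metric X 0 1 q * mink Z (pd 0 X q) * mink Z (pd m (pd 1 X) q))
      + pd m (ind_metric X 0 0) q * mink Z (pd 1 X q) * mink Z (pd 1 X q)
      + 2 * ind_metric X 0 0 q * mink Z (pd 1 X q) * mink Z (pd m (pd 1 X) q)"
proof -
  have ind_metric: "ind_metric X j l = (\<lambda>x. mink (pd j X x) (pd l X x))" for j l
    by (simp add: ind_metric_def fun_eq_iff)
  have "ind_metric X j l differentiable (at q)" for j l
    unfolding ind_metric by (rule differentiable_bounded_bilinear[OF bounded_bilinear_mink assms assms])
  moreover have "(\<lambda>x. mink Z (pd j X x)) differentiable (at q)" for j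
    by (rule differentiable_bounded_linear[OF bounded_linear_mink_right assms])
  moreover have "pd m (\<lambda>x. mink Z (pd j X x)) q = mink Z (pd m (pd j X) q)" for j
    using pd_bounded_linear[OF bounded_linear_mink_right assms] .
  ultimately show ?thesis
    unfolding tang_quad_def[abs_def] by (simp add: pd_quadratic_form)
qed

lemma tang_quad_eq_zero_of_lightlike:
  assumes "metric_det X x \<noteq> 0" "lightlike (tang_part X Z x)"
  shows "tang_quad X Z x = 0"
  using metric_det_mult_mink_tang_part[OF assms(1), of Z] assms(2) unfolding lightlike_def by simp

lemma mink_pd_ne_zero_of_lightlike_tang_part:
  assumes "lightlike (tang_part X Z x)"
  shows "mink Z (pd 0 X x) \<noteq> 0 \<or> mink Z (pd 1 X x) \<noteq> 0"
proof (rule ccontr)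
  assume "\<not> ?thesis"
  then have "tang_part X Z x = 0" unfolding tang_part_def lessThan_2_nat by simp
  then show False using assms unfolding lightlike_def by simp
qed

lemma pd_pd_eq_mink:
  assumes "open V" "q \<in> V" "\<And>x. x \<in> V \<Longrightarrow> pd j f x = mink Z (pd j X x)"
    and "pd j X differentiable (at q)"
  shows "pd i (pd j f) q = mink Z (pd i (pd j X) q)"
proof -
  have "pd i (pd j f) q = pd i (\<lambda>x. mink Z (pd j X x)) q"
    by (rule pd_cong_open[OF assms(1-3)])
  also have "\<dots> = mink Z (pd i (pd j X) q)"
    by (rule pd_bounded_linear[OF bounded_linear_mink_right assms(4)])
  finally show ?thesis .
qed

lemma hessian_trace_zero_of_null:
  fixes g :: "nat \<Rightarrow> nat \<Rightarrow> real" and \<Gamma> :: "nat \<Rightarrow> nat \<Rightarrow> nat \<Rightarrow> real"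
    and H :: "nat \<Rightarrow> nat \<Rightarrow> real" and h :: "nat \<Rightarrow> real"
  defines "d \<equiv> g 0 0 * g 1 1 - g 0 1 * g 1 0"
  defines "dg \<equiv> \<lambda>i j l. \<Gamma> i j l + \<Gamma> i l j"
  defines "w0 \<equiv> g 1 1 * h 0 - g 0 1 * h 1" and "w1 \<equiv> g 0 0 * h 1 - g 0 1 * h 0"
  defines "K \<equiv> \<lambda>i j. d * H i j - (\<Gamma> i j 0 * w0 + \<Gamma> i j 1 * w1)"
  assumes sym: "g 1 0 = g 0 1" "\<And>l. \<Gamma> 1 0 l = \<Gamma> 0 1 l" "H 1 0 = H 0 1"
    and nondegenerate: "d \<noteq> 0" and nonzero: "h 0 \<noteq> 0 \<or> h 1 \<noteq> 0"
    and null: "g 1 1 * h 0 * h 0 - 2 * g 0 1 * h 0 * h 1 + g 0 0 * h 1 * h 1 = 0"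
    and null_deriv: "\<And>m. dg m 1 1 * h 0 * h 0 + 2 * g 1 1 * h 0 * H m 0
      - 2 * (dg m 0 1 * h 0 * h 1 + g 0 1 * H m 0 * h 1 + g 0 1 * h 0 * H m 1)
      + dg m 0 0 * h 1 * h 1 + 2 * g 0 0 * h 1 * H m 1 = 0"
  shows "g 1 1 * K 0 0 - 2 * g 0 1 * K 0 1 + g 0 0 * K 1 1 = 0"
proof (rule traceless_if_null_kernel)
  show "g 0 0 * w0 * w0 + 2 * g 0 1 * w0 * w1 + g 1 1 * w1 * w1 = 0"
  proof -
    have "g 0 0 * w0 * w0 + 2 * g 0 1 * w0 * w1 + g 1 1 * w1 * w1
        = d * (g 1 1 * h 0 * h 0 - 2 * g 0 1 * h 0 * h 1 + g 0 0 * h 1 * h 1)"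
      unfolding w0_def w1_def d_def sym by algebra
    then show ?thesis using null by simp
  qed
  show "K 0 0 * w0 + K 0 1 * w1 = 0" "K 0 1 * w0 + K 1 1 * w1 = 0"
    using hessian_null_row[where \<Gamma>=\<Gamma> and H=H and m=0, OF sym(1) null null_deriv[of 0, unfolded dg_def]]
      hessian_null_row[where \<Gamma>=\<Gamma> and H=H and m=1, OF sym(1) null null_deriv[of 1, unfolded dg_def]] sym
    unfolding K_def d_def w0_def w1_def by simp_all
  have "d * h 0 = g 0 0 * w0 + g 0 1 * w1" "d * h 1 = g 1 1 * w1 + g 0 1 * w0"
    unfolding w0_def w1_def d_def sym by algebra+
  then show "w0 \<noteq> 0 \<or> w1 \<noteq> 0" using nonzero nondegenerate by auto
qed

lemma surf_laplacian_eq_zero_of_surf_grad_eq_tang_part: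
  assumes surf: "timelike_surface U X" and cnd: "canonical_null_direction U X Z"
    and V: "open V" "V \<subseteq> U" and grad: "\<And>x. x \<in> V \<Longrightarrow> surf_grad X f x = tang_part X Z x"
    and q: "q \<in> V"
  shows "surf_laplacian X f q = 0"
proof -
  have U: "open U" and C2: "Ck_on 2 U X" and det: "\<And>x. x \<in> U \<Longrightarrow> metric_det X x < 0"
    using surf unfolding timelike_surface_def smooth_on_def by auto
  have qU: "q \<in> U" using q V by auto
  note dX = Ck_on_2_differentiable(2)[OF C2 U]
  have pd_f: "pd k f x = mink Z (pd k X x)" if "x \<in> V" for k x
    using pd_eq_mink_of_surf_grad_eq_tang_part det grad that V by (metis less_irrefl subsetD)
  define g where "g i j = ind_metric X i j q" for i j
  define \<Gamma> where "\<Gamma> i j l = mink (pd i (pd j X) q) (pd l X q)" for i j l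
  define H where "H i j = mink Z (pd i (pd j X) q)" for i j
  define h where "h k = mink Z (pd k X q)" for k
  have pd_pd_f: "pd i (pd j f) q = H i j" for i j
    unfolding H_def using pd_pd_eq_mink[OF V(1) q pd_f dX[OF qU]] .
  have pd_g: "pd m (ind_metric X j l) q = \<Gamma> m j l + \<Gamma> m l j" for m j l
    using pd_mink[OF dX[OF qU] dX[OF qU], of m j l] mink_commute unfolding \<Gamma>_def ind_metric_def[abs_def]
    by metis
  have schwarz: "pd 1 (pd 0 X) q = pd 0 (pd 1 X) q" by (rule pd_commute[OF U qU C2])
  have sym: "g 1 0 = g 0 1" "\<And>l. \<Gamma> 1 0 l = \<Gamma> 0 1 l" "H 1 0 = H 0 1"
    unfolding g_def \<Gamma>_def H_def ind_metric_def using schwarz mink_commute by simp_all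
  have null: "tang_quad X Z x = 0" if "x \<in> V" for x
    using tang_quad_eq_zero_of_lightlike det[of x] cnd that V
    unfolding canonical_null_direction_def by (metis less_irrefl subsetD)
  have null_deriv: "pd m (tang_quad X Z) q = 0" for m
    using pd_cong_open[OF V(1) q null] by (simp add: pd_const)
  have nonzero: "h 0 \<noteq> 0 \<or> h 1 \<noteq> 0"
    using mink_pd_ne_zero_of_lightlike_tang_part cnd qU
    unfolding canonical_null_direction_def h_def by blast
  have gq: "ind_metric X i j q = g i j" for i j unfolding g_def ..
  have hq: "mink Z (pd k X q) = h k" for k unfolding h_def ..
  have dq: "metric_det X q = g 0 0 * g 1 1 - g 0 1 * g 1 0" unfolding metric_det_def gq ..
  have nondegenerate: "g 0 0 * g 1 1 - g 0 1 * g 1 0 \<noteq> 0" using det[OF qU] dq by simp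
  have null_q: "g 1 1 * h 0 * h 0 - 2 * g 0 1 * h 0 * h 1 + g 0 0 * h 1 * h 1 = 0"
    using null[OF q] unfolding tang_quad_def gq hq .
  have null_deriv_q: "(\<Gamma> m 1 1 + \<Gamma> m 1 1) * h 0 * h 0 + 2 * g 1 1 * h 0 * H m 0
      - 2 * ((\<Gamma> m 0 1 + \<Gamma> m 1 0) * h 0 * h 1 + g 0 1 * H m 0 * h 1 + g 0 1 * h 0 * H m 1)
      + (\<Gamma> m 0 0 + \<Gamma> m 0 0) * h 1 * h 1 + 2 * g 0 0 * h 1 * H m 1 = 0" for m
    using null_deriv[of m] unfolding pd_tang_quad[OF dX[OF qU]] pd_g gq hq H_def .
  show ?thesis
    unfolding surf_laplacian_def christoffel_def inv_metric_def dq gq pd_g pd_pd_f pd_f[OF q] hq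
    unfolding hessian_trace_coords[of g \<Gamma> H h, OF sym nondegenerate]
      hessian_trace_zero_of_null[of g \<Gamma> H h, OF sym nondegenerate nonzero null_q null_deriv_q]
    by simp
qed

theorem mainTheorem11:
  fixes U :: "(real \<times> real) set" and X :: "real \<times> real \<Rightarrow> 'n::finite minkowski"
    and Z :: "'n minkowski"
  assumes surf: "timelike_surface U X"
    and unit_spacelike: "mink Z Z = 1"
    and cnd: "canonical_null_direction U X Z"
  shows "(\<forall>p\<in>U. \<exists>V f. open V \<and> p \<in> V \<and> V \<subseteq> U \<and> smooth_on V f \<and>
              (\<forall>q\<in>V. surf_grad X f q = tang_part X Z q))
       \<and> (\<forall>V f. open V \<and> V \<subseteq> U \<and> smooth_on V f \<and> (\<forall>q\<in>V. surf_grad X f q = tang_part X Z q)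
              \<longrightarrow> (\<forall>q\<in>V. surf_laplacian X f q = 0))"
proof (intro conjI)
  have U: "open U" and sm: "smooth_on U X" using surf unfolding timelike_surface_def by auto
  have "smooth_on U (\<lambda>x. mink Z (X x))"
    using sm Ck_on_bounded_linear[OF bounded_linear_mink_right U] unfolding smooth_on_def by blast
  moreover have "surf_grad X (\<lambda>x. mink Z (X x)) q = tang_part X Z q" if "q \<in> U" for q
    using sm Ck_on_2_differentiable(1)[OF _ U that] surf_grad_mink_eq_tang_part
    unfolding smooth_on_def by blast
  ultimately show "\<forall>p\<in>U. \<exists>V f. open V \<and> p \<in> V \<and> V \<subseteq> U \<and> smooth_on V f \<and>
      (\<forall>q\<in>V. surf_grad X f q = tang_part X Z q)"
    using U by blast
  show "\<forall>V f. open V \<and> V \<subseteq> U \<and> smooth_on V f \<and> (\<forall>q\<in>V. surf_grad X f q = tang_part X Z q)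
      \<longrightarrow> (\<forall>q\<in>V. surf_laplacian X f q = 0)"
    using surf_laplacian_eq_zero_of_surf_grad_eq_tang_part[OF surf cnd] by blast
qed

end
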